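(* TDS is co-recursively-enumerable, i.e., the set of TDS instances that have no solution is recursively enumerable.
   Context: An instance of TDS consists of a rational discount factor $0<\lambda<1$, a rational target $t$, and rational weights $a,b$; a solution is an infinite sequence $w\in\{a,b\}^\omega$ with $\sum_{i=0}^\infty w(i)\lambda^i=t$. *)

theory Defs
  imports Complex_Main
begin

definition tds_instance :: "rat \<Rightarrow> bool" where
  "tds_instance lam \<longleftrightarrow> 0 < lam \<and> lam < 1"

definition tds_solution :: "rat \<Rightarrow> rat \<Rightarrow> rat \<Rightarrow> rat \<Rightarrow> (nat \<Rightarrow> rat) \<Rightarrow> bool" where
  "tds_solution lam t a b w \<longleftrightarrow>
     (\<forall>i. w i \<in> {a, b}) \<and>
     ((\<lambda>i. real_of_rat (w i) * real_of_rat lam ^ i) sums real_of_rat t)"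

datatype recf = Zero | Succ | Proj nat | Comp recf "recf list"
  | PrimRec recf recf | Minim recf

inductive reval :: "recf \<Rightarrow> nat list \<Rightarrow> nat \<Rightarrow> bool" where
  zero: "reval Zero xs 0"
| succ: "reval Succ (x # xs) (Suc x)"
| proj: "i < length xs \<Longrightarrow> reval (Proj i) xs (xs ! i)"
| comp: "list_all2 (\<lambda>g z. reval g xs z) gs zs \<Longrightarrow> reval f zs y \<Longrightarrow> reval (Comp f gs) xs y"
| prim0: "reval f xs y \<Longrightarrow> reval (PrimRec f g) (0 # xs) y"
| primS: "reval (PrimRec f g) (n # xs) r \<Longrightarrow> reval g (r # n # xs) y
          \<Longrightarrow> reval (PrimRec f g) (Suc n # xs) y"
| minim: "reval f (y # xs) 0 \<Longrightarrow> (\<forall>z<y. \<exists>v. v > 0 \<and> reval f (z # xs) v)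
          \<Longrightarrow> reval (Minim f) xs y"
monos list_all2_mono

definition re_set :: "nat \<Rightarrow> nat list set \<Rightarrow> bool" where
  "re_set k A \<longleftrightarrow> (\<forall>xs\<in>A. length xs = k) \<and>
     (\<exists>f. \<forall>xs. length xs = k \<longrightarrow> (xs \<in> A \<longleftrightarrow> (\<exists>y. reval f xs y)))"

definition int_code :: "int \<Rightarrow> nat" where
  "int_code z = (if z \<ge> 0 then nat (2 * z) else nat (- 2 * z - 1))"

definition rat_code :: "rat \<Rightarrow> nat list" where
  "rat_code q = [int_code (fst (quotient_of q)), int_code (snd (quotient_of q))]"

definition inst_code :: "rat \<Rightarrow> rat \<Rightarrow> rat \<Rightarrow> rat \<Rightarrow> nat list" where
  "inst_code lam t a b = rat_code lam @ rat_code t @ rat_code a @ rat_code b"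

end

(*
  A solution is an infinite path through the binary tree of choices between a and b. Every
  discounted sum of a word extending a prefix of length n differs from the prefix sum S_n by a
  value in lam^n [min a b, max a b] / (1 - lam), so only prefixes with t - S_n in that range can be
  extended to a solution. Conversely these feasible prefixes form a tree closed under taking
  prefixes; if all its levels are nonempty, Koenig's lemma yields an infinite path, and its sums
  converge to t. Hence an instance is unsolvable iff at some depth n none of the 2^n prefixes is
  feasible. After clearing denominators this is a decidable integer condition, and unbounded search
  for such an n is a partial recursive function that halts exactly on the unsolvable instances.
*)
theory Submission
  imports Defs "HOL-Library.Nat_Bijection"
begin

section \<open>Total recursive functions and decidable predicates\<close>

definition computable :: "nat \<Rightarrow> (nat list \<Rightarrow> nat) \<Rightarrow> bool" where
  "computable k f \<longleftrightarrow> (\<exists>c. \<forall>xs. length xs = k \<longrightarrow> reval c xs (f xs))"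

lemma computable_cong:
  assumes "computable k f" and "\<And>xs. length xs = k \<Longrightarrow> f xs = g xs"
  shows "computable k g"
  using assms unfolding computable_def by metis

lemma computable_zero: "computable k (\<lambda>xs. 0)"
  unfolding computable_def by (blast intro: reval.zero)

lemma computable_nth: "i < k \<Longrightarrow> computable k (\<lambda>xs. xs ! i)"
  unfolding computable_def by (auto intro: reval.proj)

lemma computable_Suc: "computable 1 (\<lambda>xs. Suc (xs ! 0))"
  unfolding computable_def by (auto intro!: exI[of _ Succ] reval.succ simp: length_Suc_conv)

lemma computable_compose:
  assumes "computable (length fs) g" and "\<forall>f\<in>set fs. computable k f"
  shows "computable k (\<lambda>xs. g (map (\<lambda>f. f xs) fs))"
proof -
  obtain cg where cg: "\<And>xs. length xs = length fs \<Longrightarrow> reval cg xs (g xs)"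
    using assms(1) unfolding computable_def by blast
  obtain code where code: "\<And>f xs. f \<in> set fs \<Longrightarrow> length xs = k \<Longrightarrow> reval (code f) xs (f xs)"
    using bchoice[OF assms(2)[unfolded computable_def]] by blast
  have "reval (Comp cg (map code fs)) xs (g (map (\<lambda>f. f xs) fs))" if "length xs = k" for xs
  proof (rule reval.comp)
    show "list_all2 (\<lambda>c z. reval c xs z) (map code fs) (map (\<lambda>f. f xs) fs)"
      using code that by (auto simp: list_all2_map1 list_all2_map2 intro: list.rel_refl_strong)
  qed (simp add: cg)
  then show ?thesis
    unfolding computable_def by blast
qed

lemma computable_compose1:
  "computable 1 g \<Longrightarrow> computable k f \<Longrightarrow> computable k (\<lambda>xs. g [f xs])"
  using computable_compose[of "[f]" g k] by simp

lemma computable_compose2: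
  "computable 2 g \<Longrightarrow> computable k f1 \<Longrightarrow> computable k f2 \<Longrightarrow> computable k (\<lambda>xs. g [f1 xs, f2 xs])"
  using computable_compose[of "[f1, f2]" g k] by (simp add: numeral_2_eq_2)

lemma computable_tl:
  assumes "computable k f"
  shows "computable (Suc k) (\<lambda>xs. f (tl xs))"
proof -
  have tl_eq: "map (\<lambda>j. xs ! Suc j) [0..<k] = tl xs" if "length xs = Suc k" for xs :: "nat list"
    using that by (intro nth_equalityI) (auto simp: nth_tl)
  have "computable (Suc k) (\<lambda>xs. f (map (\<lambda>g. g xs) (map (\<lambda>j xs. xs ! Suc j) [0..<k])))"
    using assms by (intro computable_compose) (auto intro: computable_nth)
  then show ?thesis
    by (rule computable_cong) (simp add: comp_def tl_eq)
qed

lemma computable_Cons: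
  assumes "computable (Suc k) f" and "computable k g"
  shows "computable k (\<lambda>xs. f (g xs # xs))"
proof -
  have "computable k (\<lambda>xs. f (map (\<lambda>h. h xs) (g # map (\<lambda>j xs. xs ! j) [0..<k])))"
    using assms by (intro computable_compose) (auto intro: computable_nth)
  then show ?thesis
    by (rule computable_cong) (simp add: comp_def, metis map_nth)
qed

fun prim_rec :: "(nat list \<Rightarrow> nat) \<Rightarrow> (nat list \<Rightarrow> nat) \<Rightarrow> nat \<Rightarrow> nat list \<Rightarrow> nat" where
  "prim_rec f g 0 ys = f ys"
| "prim_rec f g (Suc n) ys = g (prim_rec f g n ys # n # ys)"

lemma computable_prim_rec:
  assumes "computable k f" and "computable (Suc (Suc k)) g"
  shows "computable (Suc k) (\<lambda>xs. prim_rec f g (hd xs) (tl xs))"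
proof -
  obtain cf where cf: "\<And>xs. length xs = k \<Longrightarrow> reval cf xs (f xs)"
    using assms(1) unfolding computable_def by blast
  obtain cg where cg: "\<And>xs. length xs = Suc (Suc k) \<Longrightarrow> reval cg xs (g xs)"
    using assms(2) unfolding computable_def by blast
  have "reval (PrimRec cf cg) (n # ys) (prim_rec f g n ys)" if "length ys = k" for n ys
    by (induction n) (use that in \<open>auto intro: reval.prim0 cf cg reval.primS[OF _ cg]\<close>)
  then show ?thesis
    unfolding computable_def by (auto intro!: exI[of _ "PrimRec cf cg"] simp: length_Suc_conv)
qed

lemma computable_const: "computable k (\<lambda>xs. n)"
  by (induction n) (auto intro: computable_zero dest: computable_compose1[OF computable_Suc])

lemma computable_add:
  assumes "computable k f" and "computable k g"
  shows "computable k (\<lambda>xs. f xs + g xs)"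
proof -
  have "prim_rec (\<lambda>ys. ys ! 0) (\<lambda>zs. Suc (zs ! 0)) n ys = n + ys ! 0" for n ys
    by (induction n) auto
  moreover have "computable 2 (\<lambda>xs. prim_rec (\<lambda>ys. ys ! 0) (\<lambda>zs. Suc (zs ! 0)) (hd xs) (tl xs))"
    using computable_prim_rec[of 1] computable_compose1[OF computable_Suc, of 3]
    by (simp add: numeral_eq_Suc computable_nth)
  ultimately have "computable 2 (\<lambda>xs. xs ! 0 + xs ! 1)"
    by (auto elim!: computable_cong simp: numeral_eq_Suc length_Suc_conv)
  from computable_compose2[OF this assms] show ?thesis
    by simp
qed

lemma computable_mult:
  assumes "computable k f" and "computable k g"
  shows "computable k (\<lambda>xs. f xs * g xs)"
proof -
  have "prim_rec (\<lambda>ys. 0) (\<lambda>zs. zs ! 0 + zs ! 2) n ys = n * ys ! 0" for n ys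
    by (induction n) auto
  moreover have "computable 2 (\<lambda>xs. prim_rec (\<lambda>ys. 0) (\<lambda>zs. zs ! 0 + zs ! 2) (hd xs) (tl xs))"
    using computable_prim_rec[of 1] computable_zero computable_add[OF computable_nth computable_nth, of 0 3 2]
    by (simp add: numeral_eq_Suc)
  ultimately have "computable 2 (\<lambda>xs. xs ! 0 * xs ! 1)"
    by (auto elim!: computable_cong simp: numeral_eq_Suc length_Suc_conv)
  from computable_compose2[OF this assms] show ?thesis
    by simp
qed

lemma computable_diff:
  assumes "computable k f" and "computable k g"
  shows "computable k (\<lambda>xs. f xs - g xs)"
proof -
  have "prim_rec (\<lambda>ys. 0) (\<lambda>zs. zs ! 1) n ys = n - 1" for n ys
    by (induction n) auto
  moreover have "computable 1 (\<lambda>xs. prim_rec (\<lambda>ys. 0) (\<lambda>zs. zs ! 1) (hd xs) (tl xs))"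
    using computable_prim_rec[of 0] computable_zero computable_nth[of 1 2] by (simp add: numeral_2_eq_2)
  ultimately have pred: "computable 1 (\<lambda>xs. xs ! 0 - 1)"
    by (auto elim!: computable_cong simp: length_Suc_conv)
  have "prim_rec (\<lambda>ys. ys ! 0) (\<lambda>zs. zs ! 0 - 1) n ys = ys ! 0 - n" for n ys
    by (induction n) auto
  moreover have "computable 2 (\<lambda>xs. prim_rec (\<lambda>ys. ys ! 0) (\<lambda>zs. zs ! 0 - 1) (hd xs) (tl xs))"
    using computable_prim_rec[of 1] computable_nth[of 0 1] computable_compose1[OF pred computable_nth, of 0 3]
    by (simp add: numeral_eq_Suc)
  ultimately have "computable 2 (\<lambda>xs. xs ! 1 - xs ! 0)"
    by (auto elim!: computable_cong simp: numeral_eq_Suc length_Suc_conv)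
  from computable_compose2[OF this assms(2,1)] show ?thesis
    by simp
qed

lemma computable_power:
  assumes "computable k f" and "computable k g"
  shows "computable k (\<lambda>xs. f xs ^ g xs)"
proof -
  have "prim_rec (\<lambda>ys. 1) (\<lambda>zs. zs ! 0 * zs ! 2) n ys = ys ! 0 ^ n" for n ys
    by (induction n) auto
  moreover have "computable 2 (\<lambda>xs. prim_rec (\<lambda>ys. 1) (\<lambda>zs. zs ! 0 * zs ! 2) (hd xs) (tl xs))"
    using computable_prim_rec[of 1] computable_const computable_mult[OF computable_nth computable_nth, of 0 3 2]
    by (simp add: numeral_eq_Suc)
  ultimately have "computable 2 (\<lambda>xs. xs ! 1 ^ xs ! 0)"
    by (auto elim!: computable_cong simp: numeral_eq_Suc length_Suc_conv)
  from computable_compose2[OF this assms(2,1)] show ?thesis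
    by simp
qed

lemma computable_sum:
  assumes "computable (Suc k) f" and "computable k n"
  shows "computable k (\<lambda>xs. \<Sum>i<n xs. f (i # xs))"
proof -
  have "prim_rec (\<lambda>ys. 0) (\<lambda>zs. zs ! 0 + f (tl zs)) m ys = (\<Sum>i<m. f (i # ys))" for m ys
    by (induction m) auto
  moreover have "computable (Suc k) (\<lambda>xs. prim_rec (\<lambda>ys. 0) (\<lambda>zs. zs ! 0 + f (tl zs)) (hd xs) (tl xs))"
    using assms(1) by (intro computable_prim_rec computable_add computable_tl computable_nth computable_zero) auto
  ultimately have "computable (Suc k) (\<lambda>xs. \<Sum>i<hd xs. f (i # tl xs))"
    by simp
  from computable_Cons[OF this assms(2)] show ?thesis
    by simp
qed

definition decidable :: "nat \<Rightarrow> (nat list \<Rightarrow> bool) \<Rightarrow> bool" where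
  "decidable k P \<longleftrightarrow> computable k (\<lambda>xs. of_bool (P xs))"

lemma decidable_cong:
  assumes "decidable k P" and "\<And>xs. length xs = k \<Longrightarrow> P xs = Q xs"
  shows "decidable k Q"
  using assms unfolding decidable_def by (auto elim!: computable_cong)

lemma decidable_le:
  assumes "computable k f" and "computable k g"
  shows "decidable k (\<lambda>xs. f xs \<le> g xs)"
proof -
  have "computable k (\<lambda>xs. 1 - (f xs - g xs))"
    using assms by (intro computable_diff computable_const)
  then show ?thesis
    unfolding decidable_def by (rule computable_cong) auto
qed

lemma decidable_less:
  assumes "computable k f" and "computable k g"
  shows "decidable k (\<lambda>xs. f xs < g xs)"
  using decidable_le[OF computable_add[OF assms(1) computable_const[of k 1]] assms(2)]
  by (simp add: Suc_le_eq)

lemma decidable_not: "decidable k P \<Longrightarrow> decidable k (\<lambda>xs. \<not> P xs)"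
  unfolding decidable_def by (drule computable_diff[OF computable_const[of k 1]]) (auto elim!: computable_cong)

lemma decidable_conj: "decidable k P \<Longrightarrow> decidable k Q \<Longrightarrow> decidable k (\<lambda>xs. P xs \<and> Q xs)"
  unfolding decidable_def by (drule (1) computable_mult) (simp add: of_bool_conj)

lemma decidable_imp: "decidable k P \<Longrightarrow> decidable k Q \<Longrightarrow> decidable k (\<lambda>xs. P xs \<longrightarrow> Q xs)"
  using decidable_not[OF decidable_conj[OF _ decidable_not]] by simp

lemma decidable_eq:
  "computable k f \<Longrightarrow> computable k g \<Longrightarrow> decidable k (\<lambda>xs. f xs = g xs)"
  using decidable_conj[OF decidable_le decidable_le, of k f g g f] by (simp add: order_eq_iff)

lemma decidable_ball:
  assumes "decidable (Suc k) P" and "computable k n"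
  shows "decidable k (\<lambda>xs. \<forall>i<n xs. P (i # xs))"
proof -
  have "computable k (\<lambda>xs. \<Sum>i<n xs. of_bool (\<not> P (i # xs)))"
    using computable_sum[OF decidable_not[OF assms(1), unfolded decidable_def] assms(2)] .
  from decidable_eq[OF this computable_zero] show ?thesis
    by (rule decidable_cong) auto
qed

lemma computable_If:
  assumes "decidable k P" and "computable k f" and "computable k g"
  shows "computable k (\<lambda>xs. if P xs then f xs else g xs)"
proof -
  have "computable k (\<lambda>xs. of_bool (P xs) * f xs + of_bool (\<not> P xs) * g xs)"
    using assms decidable_not[OF assms(1)] unfolding decidable_def
    by (intro computable_add computable_mult)
  then show ?thesis
    by (rule computable_cong) simp
qed

lemma computable_div:
  assumes "computable k f" and "computable k g"
  shows "computable k (\<lambda>xs. f xs div g xs)"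
proof -
  have div_eq: "x div y = (\<Sum>j<x. of_bool (0 < y \<and> (j + 1) * y \<le> x))" for x y :: nat
  proof (cases "y = 0")
    case False
    have "j < x \<and> (j + 1) * y \<le> x \<longleftrightarrow> j < x div y" for j
      using less_eq_div_iff_mult_less_eq[of y "j + 1" x] False
      by (auto simp: Suc_le_eq dest: less_le_trans[OF _ div_le_dividend])
    then have "{..<x} \<inter> {j. (j + 1) * y \<le> x} = {..<x div y}"
      by blast
    then show ?thesis
      using False by simp
  qed simp
  have "decidable (Suc 2) (\<lambda>ys. 0 < ys ! 2 \<and> (ys ! 0 + 1) * ys ! 2 \<le> ys ! 1)"
    by (intro decidable_conj decidable_less decidable_le computable_mult computable_add
        computable_nth computable_const) auto
  from computable_sum[OF this[unfolded decidable_def] computable_nth[of 0 2, simplified]]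
  have "computable 2 (\<lambda>xs. xs ! 0 div xs ! 1)"
    by (rule computable_cong) (simp add: div_eq nth_Cons' del: sum_of_bool_eq)
  from computable_compose2[OF this assms] show ?thesis
    by simp
qed

lemma decidable_dvd:
  assumes "computable k f" and "computable k g"
  shows "decidable k (\<lambda>xs. f xs dvd g xs)"
proof -
  have "decidable k (\<lambda>xs. g xs - f xs * (g xs div f xs) = 0)"
    using assms by (intro decidable_eq computable_diff computable_mult computable_div computable_zero)
  then show ?thesis
    by (simp add: minus_mult_div_eq_mod dvd_eq_mod_eq_0)
qed

lemma decidable_bit:
  assumes "computable k f" and "computable k g"
  shows "decidable k (\<lambda>xs. bit (f xs) (g xs))"
proof -
  have "decidable k (\<lambda>xs. \<not> 2 dvd f xs div 2 ^ g xs)"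
    using assms by (intro decidable_not decidable_dvd computable_div computable_power computable_const)
  then show ?thesis
    by (simp only: bit_iff_odd)
qed

lemma reval_unique: "reval f xs y \<Longrightarrow> reval f xs y' \<Longrightarrow> y = y'"
proof (induction arbitrary: y' rule: reval.induct)
  case (zero xs)
  from zero.prems show ?case
    by (cases rule: reval.cases) auto
next
  case (succ x xs)
  from succ.prems show ?case
    by (cases rule: reval.cases) auto
next
  case (proj i xs)
  from proj.prems show ?case
    by (cases rule: reval.cases) auto
next
  case (comp xs gs zs f y)
  from comp.prems obtain zs' where zs': "list_all2 (\<lambda>g z. reval g xs z) gs zs'" "reval f zs' y'"
    by (cases rule: reval.cases) auto
  have "zs = zs'"
    using comp.IH(1) zs'(1) by (induction gs arbitrary: zs zs') (auto simp: list_all2_Cons1)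
  then show ?case
    using comp.IH(2) zs'(2) by blast
next
  case (prim0 f xs y)
  from prim0.prems show ?case
    by (cases rule: reval.cases) (auto dest: prim0.IH)
next
  case (primS f g n xs r y)
  from primS.prems obtain r' where "reval (PrimRec f g) (n # xs) r'" "reval g (r' # n # xs) y'"
    by (cases rule: reval.cases) auto
  then show ?case
    using primS.IH by metis
next
  case (minim f y xs)
  from minim.prems obtain z where z: "y' = z" "reval f (z # xs) 0" "\<forall>u<z. \<exists>v>0. reval f (u # xs) v"
    by (cases rule: reval.cases) auto
  show ?case
  proof (cases y z rule: linorder_cases)
    case less
    then obtain v where "v > 0" "reval f (y # xs) v"
      using z(3) by blast
    then show ?thesis
      using minim.IH(1) by fastforce
  next
    case greater
    then obtain v where "v > 0" "\<And>w. reval f (z # xs) w \<Longrightarrow> v = w"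
      using minim.IH(2) by blast
    then show ?thesis
      using z(2) by fastforce
  qed (use z(1) in simp)
qed

lemma re_set_ex_decidable:
  assumes "decidable (Suc k) P"
  shows "re_set k {xs. length xs = k \<and> (\<exists>n. P (n # xs))}"
proof -
  obtain c where c: "\<And>xs. length xs = Suc k \<Longrightarrow> reval c xs (of_bool (\<not> P xs))"
    using decidable_not[OF assms] unfolding decidable_def computable_def by blast
  have "(\<exists>y. reval (Minim c) xs y) \<longleftrightarrow> (\<exists>n. P (n # xs))" if "length xs = k" for xs
  proof
    assume "\<exists>y. reval (Minim c) xs y"
    then obtain n where "reval c (n # xs) 0"
      by (auto elim: reval.cases)
    with c[of "n # xs"] that show "\<exists>n. P (n # xs)"
      by (auto dest: reval_unique)
  next
    assume "\<exists>n. P (n # xs)"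
    define n where "n = (LEAST n. P (n # xs))"
    have "P (n # xs)"
      unfolding n_def using \<open>\<exists>n. P (n # xs)\<close> by (rule LeastI_ex)
    then have "reval c (n # xs) 0"
      using c[of "n # xs"] that by simp
    moreover have "reval c (z # xs) 1" if "z < n" for z
      using c[of "z # xs"] not_less_Least[OF \<open>z < n\<close>[unfolded n_def]] \<open>length xs = k\<close> by simp
    ultimately have "reval (Minim c) xs n"
      by (intro reval.minim) auto
    then show "\<exists>y. reval (Minim c) xs y" ..
  qed
  then show ?thesis
    unfolding re_set_def by (intro conjI exI[of _ "Minim c"]) auto
qed

definition int_computable :: "nat \<Rightarrow> (nat list \<Rightarrow> int) \<Rightarrow> bool" where
  "int_computable k f \<longleftrightarrow> (\<exists>g h. computable k g \<and> computable k h \<and>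
     (\<forall>xs. length xs = k \<longrightarrow> f xs = int (g xs) - int (h xs)))"

lemma int_computableI:
  assumes "computable k g" and "computable k h" and "\<And>xs. length xs = k \<Longrightarrow> f xs = int (g xs) - int (h xs)"
  shows "int_computable k f"
  using assms unfolding int_computable_def by blast

lemma int_computable_cong:
  assumes "int_computable k f" and "\<And>xs. length xs = k \<Longrightarrow> f xs = g xs"
  shows "int_computable k g"
  using assms unfolding int_computable_def by metis

lemma int_computable_of_nat: "computable k f \<Longrightarrow> int_computable k (\<lambda>xs. int (f xs))"
  by (rule int_computableI[of k f "\<lambda>xs. 0"]) (auto intro: computable_zero)

lemma int_computable_const: "int_computable k (\<lambda>xs. c)"
  by (rule int_computableI[OF computable_const[of k "nat c"] computable_const[of k "nat (- c)"]]) simp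

lemma int_computable_diff:
  assumes "int_computable k f" and "int_computable k g"
  shows "int_computable k (\<lambda>xs. f xs - g xs)"
proof -
  obtain f1 f2 g1 g2 where "computable k f1" "computable k f2" "computable k g1" "computable k g2"
    and "\<And>xs. length xs = k \<Longrightarrow> f xs = int (f1 xs) - int (f2 xs)"
    and "\<And>xs. length xs = k \<Longrightarrow> g xs = int (g1 xs) - int (g2 xs)"
    using assms unfolding int_computable_def by metis
  then show ?thesis
    by (intro int_computableI[of k "\<lambda>xs. f1 xs + g2 xs" "\<lambda>xs. f2 xs + g1 xs"] computable_add) auto
qed

lemma int_computable_mult:
  assumes "int_computable k f" and "int_computable k g"
  shows "int_computable k (\<lambda>xs. f xs * g xs)"
proof -
  obtain f1 f2 g1 g2 where "computable k f1" "computable k f2" "computable k g1" "computable k g2"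
    and f: "\<And>xs. length xs = k \<Longrightarrow> f xs = int (f1 xs) - int (f2 xs)"
    and g: "\<And>xs. length xs = k \<Longrightarrow> g xs = int (g1 xs) - int (g2 xs)"
    using assms unfolding int_computable_def by metis
  then show ?thesis
    by (intro int_computableI[of k "\<lambda>xs. f1 xs * g1 xs + f2 xs * g2 xs" "\<lambda>xs. f1 xs * g2 xs + f2 xs * g1 xs"]
        computable_add computable_mult) (simp_all add: f g algebra_simps)
qed

lemma int_computable_If:
  assumes "decidable k P" and "int_computable k f" and "int_computable k g"
  shows "int_computable k (\<lambda>xs. if P xs then f xs else g xs)"
proof -
  obtain f1 f2 g1 g2 where "computable k f1" "computable k f2" "computable k g1" "computable k g2"
    and "\<And>xs. length xs = k \<Longrightarrow> f xs = int (f1 xs) - int (f2 xs)"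
    and "\<And>xs. length xs = k \<Longrightarrow> g xs = int (g1 xs) - int (g2 xs)"
    using assms(2,3) unfolding int_computable_def by metis
  with assms(1) show ?thesis
    by (intro int_computableI[of k "\<lambda>xs. if P xs then f1 xs else g1 xs" "\<lambda>xs. if P xs then f2 xs else g2 xs"]
        computable_If) auto
qed

lemma int_computable_sum:
  assumes "int_computable (Suc k) f" and "computable k n"
  shows "int_computable k (\<lambda>xs. \<Sum>i<n xs. f (i # xs))"
proof -
  obtain g h where "computable (Suc k) g" "computable (Suc k) h"
    and "\<And>xs. length xs = Suc k \<Longrightarrow> f xs = int (g xs) - int (h xs)"
    using assms(1) unfolding int_computable_def by blast
  with assms(2) show ?thesis
    by (intro int_computableI[of k "\<lambda>xs. \<Sum>i<n xs. g (i # xs)" "\<lambda>xs. \<Sum>i<n xs. h (i # xs)"]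
        computable_sum) (auto simp: sum_subtractf)
qed

lemma int_computable_tl: "int_computable k f \<Longrightarrow> int_computable (Suc k) (\<lambda>xs. f (tl xs))"
  unfolding int_computable_def by (fastforce intro: computable_tl)

lemma decidable_int_le:
  assumes "int_computable k f" and "int_computable k g"
  shows "decidable k (\<lambda>xs. f xs \<le> g xs)"
proof -
  obtain h1 h2 where "computable k h1" "computable k h2"
    and h: "\<And>xs. length xs = k \<Longrightarrow> f xs - g xs = int (h1 xs) - int (h2 xs)"
    using int_computable_diff[OF assms] unfolding int_computable_def by blast
  then have "decidable k (\<lambda>xs. h1 xs \<le> h2 xs)"
    by (intro decidable_le)
  then show ?thesis
    by (rule decidable_cong) (use h in force)
qed

lemma decidable_int_less:
  "int_computable k f \<Longrightarrow> int_computable k g \<Longrightarrow> decidable k (\<lambda>xs. f xs < g xs)"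
  using decidable_not[OF decidable_int_le, of k g f] by (simp add: not_le)

lemma int_decode_eq: "int_decode n = (if even n then int (n div 2) else - int (n div 2) - 1)"
  by (simp add: int_decode_def sum_decode_def)

lemma int_computable_int_decode:
  assumes "computable k f"
  shows "int_computable k (\<lambda>xs. int_decode (f xs))"
proof -
  have "int_computable k (\<lambda>xs. if even (f xs) then int (f xs div 2) else int 0 - int (f xs div 2 + 1))"
    using assms by (intro int_computable_If int_computable_diff int_computable_of_nat decidable_dvd
        computable_div computable_add computable_const)
  then show ?thesis
    by (rule int_computable_cong) (simp add: int_decode_eq)
qed

lemma coprime_iff_bounded:
  fixes x y :: nat
  shows "coprime x y \<longleftrightarrow> (\<forall>e<x + y + 1. e dvd x \<and> e dvd y \<longrightarrow> e = 1)"
proof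
  assume "coprime x y"
  then show "\<forall>e<x + y + 1. e dvd x \<and> e dvd y \<longrightarrow> e = 1"
    using coprime_common_divisor_nat by blast
next
  assume bounded: "\<forall>e<x + y + 1. e dvd x \<and> e dvd y \<longrightarrow> e = 1"
  have "gcd x y \<le> x + y"
    by (cases "x = 0") (auto intro: trans_le_add1 dest: gcd_le1_nat)
  with bounded have "gcd x y = 1"
    by simp
  then show "coprime x y"
    by (rule gcd_eq_1_imp_coprime)
qed

lemma decidable_coprime:
  assumes "computable k f" and "computable k g"
  shows "decidable k (\<lambda>xs. coprime (f xs) (g xs))"
proof -
  have divisor_test: "decidable (Suc k) (\<lambda>ys. ys ! 0 dvd f (tl ys) \<and> ys ! 0 dvd g (tl ys) \<longrightarrow> ys ! 0 = 1)"
    using assms by (intro decidable_imp decidable_conj decidable_dvd decidable_eq computable_nth computable_tl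
        computable_const) simp_all
  have "computable k (\<lambda>xs. f xs + g xs + 1)"
    using assms by (intro computable_add computable_const)
  from decidable_ball[OF divisor_test this] show ?thesis
    by (simp add: coprime_iff_bounded)
qed

section \<open>Koenig's lemma for binary trees\<close>

lemma koenig_binary:
  fixes C :: "nat \<Rightarrow> (nat \<Rightarrow> bool) \<Rightarrow> bool"
  assumes prefix: "\<And>n f g. \<forall>i<n. f i = g i \<Longrightarrow> C n f \<longleftrightarrow> C n g"
    and downward_closed: "\<And>n f. C (Suc n) f \<Longrightarrow> C n f"
    and nonempty: "\<And>n. \<exists>f. C n f"
  shows "\<exists>f. \<forall>n. C n f"
proof -
  have closed: "C m f" if "C n f" and "m \<le> n" for m n f
    using that by (induction n) (auto simp: le_Suc_eq dest: downward_closed)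
  define extendable where "extendable n f \<longleftrightarrow> (\<forall>m. \<exists>g. (\<forall>i<n. g i = f i) \<and> C m g)" for n f
  have extend: "\<exists>b. extendable (Suc n) (f(n := b))" if ext: "extendable n f" for n f
  proof (rule ccontr)
    assume "\<nexists>b. extendable (Suc n) (f(n := b))"
    then have "\<forall>b. \<exists>m. \<forall>g. (\<forall>i<Suc n. g i = (f(n := b)) i) \<longrightarrow> \<not> C m g"
      unfolding extendable_def by (simp only: not_ex not_all not_imp de_Morgan_conj) metis
    then obtain m where m: "\<And>b g. \<forall>i<Suc n. g i = (f(n := b)) i \<Longrightarrow> \<not> C (m b) g"
      by metis
    obtain g where g: "\<forall>i<n. g i = f i" "C (max (m True) (m False)) g"
      using ext unfolding extendable_def by blast
    have "\<forall>i<Suc n. g i = (f(n := g n)) i"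
      using g(1) by (auto simp: less_Suc_eq)
    moreover have "C (m (g n)) g"
      using closed[OF g(2)] by (cases "g n") auto
    ultimately show False
      using m by blast
  qed
  define path where "path = rec_nat (\<lambda>_. False)
    (\<lambda>n f. if extendable (Suc n) (f(n := True)) then f(n := True) else f(n := False))"
  have path_Suc: "path (Suc n) = (if extendable (Suc n) ((path n)(n := True))
      then (path n)(n := True) else (path n)(n := False))" for n
    by (simp add: path_def)
  have extendable_path: "extendable n (path n)" for n
  proof (induction n)
    case 0
    show ?case
      using nonempty unfolding extendable_def by simp
  next
    case (Suc n)
    show ?case
    proof (cases "extendable (Suc n) ((path n)(n := True))")
      case True
      then show ?thesis
        unfolding path_Suc if_P[OF True] .
    next
      case False
      with extend[OF Suc] have "extendable (Suc n) ((path n)(n := False))"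
        by (metis (full_types))
      then show ?thesis
        unfolding path_Suc if_not_P[OF False] .
    qed
  qed
  have path_stable: "path m i = path (Suc i) i" if "Suc i \<le> m" for i m
    using that by (induction rule: dec_induct) (auto simp: path_Suc)
  have "C n (\<lambda>i. path (Suc i) i)" for n
  proof -
    obtain g where g: "\<forall>i<n. g i = path n i" "C n g"
      using extendable_path[of n] unfolding extendable_def by blast
    then have "\<forall>i<n. g i = path (Suc i) i"
      using path_stable[of _ n] by (simp add: Suc_le_eq)
    then show ?thesis
      using prefix[of n g "\<lambda>i. path (Suc i) i"] g(2) by simp
  qed
  then show ?thesis
    by blast
qed

section \<open>Discounted sums and feasible prefixes\<close>

definition prefix_sum :: "real \<Rightarrow> real \<Rightarrow> real \<Rightarrow> (nat \<Rightarrow> bool) \<Rightarrow> nat \<Rightarrow> real" where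
  "prefix_sum lam a b f n = (\<Sum>i<n. (if f i then a else b) * lam ^ i)"

text \<open>A prefix is feasible if the remaining target \<open>t - prefix_sum lam a b f n\<close> lies in the range
  \<open>lam ^ n * [min a b, max a b] / (1 - lam)\<close> of the discounted sums of the tails.\<close>

definition feasible_prefix :: "real \<Rightarrow> real \<Rightarrow> real \<Rightarrow> real \<Rightarrow> nat \<Rightarrow> (nat \<Rightarrow> bool) \<Rightarrow> bool" where
  "feasible_prefix lam t a b n f \<longleftrightarrow>
     lam ^ n * min a b \<le> (t - prefix_sum lam a b f n) * (1 - lam) \<and>
     (t - prefix_sum lam a b f n) * (1 - lam) \<le> lam ^ n * max a b"

lemma feasible_prefix_cong:
  assumes "\<forall>i<n. f i = g i"
  shows "feasible_prefix lam t a b n f \<longleftrightarrow> feasible_prefix lam t a b n g"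
proof -
  have "prefix_sum lam a b f n = prefix_sum lam a b g n"
    using assms unfolding prefix_sum_def by (intro sum.cong) auto
  then show ?thesis
    unfolding feasible_prefix_def by simp
qed

lemma feasible_prefix_Suc:
  assumes "0 \<le> lam" and "lam \<le> 1" and "feasible_prefix lam t a b (Suc n) f"
  shows "feasible_prefix lam t a b n f"
proof -
  define c where "c = (if f n then a else b)"
  define w where "w = lam ^ n * (1 - lam)"
  have step: "(t - prefix_sum lam a b f n) * (1 - lam) = (t - prefix_sum lam a b f (Suc n)) * (1 - lam) + w * c"
    by (simp add: prefix_sum_def c_def w_def algebra_simps)
  have split: "lam ^ n * x = lam ^ Suc n * x + w * x" for x
    by (simp add: w_def algebra_simps)
  have "w * min a b \<le> w * c" and "w * c \<le> w * max a b"
    using assms(1,2) by (auto intro!: mult_left_mono simp: w_def c_def)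
  then show ?thesis
    using assms(3) split[of "min a b"] split[of "max a b"] unfolding feasible_prefix_def step by linarith
qed

lemma feasible_prefix_if_sums:
  assumes "0 \<le> lam" and "lam < 1" and "(\<lambda>i. (if f i then a else b) * lam ^ i) sums t"
  shows "feasible_prefix lam t a b n f"
proof -
  have tail: "(\<lambda>i. (if f (i + n) then a else b) * lam ^ (i + n)) sums (t - prefix_sum lam a b f n)"
    using sums_split_initial_segment[OF assms(3), of n] by (simp add: prefix_sum_def)
  have geometric: "(\<lambda>i. lam ^ n * x * lam ^ i) sums (lam ^ n * x / (1 - lam))" for x
    using sums_mult[OF geometric_sums[of lam], of "lam ^ n * x"] assms(1,2) by simp
  have "lam ^ n * min a b * lam ^ i \<le> (if f (i + n) then a else b) * lam ^ (i + n)"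
    and "(if f (i + n) then a else b) * lam ^ (i + n) \<le> lam ^ n * max a b * lam ^ i" for i
    using assms(1) by (auto intro!: mult_right_mono simp: power_add mult_ac)
  then have "lam ^ n * min a b / (1 - lam) \<le> t - prefix_sum lam a b f n"
    and "t - prefix_sum lam a b f n \<le> lam ^ n * max a b / (1 - lam)"
    by (auto intro: sums_le[OF _ geometric tail] sums_le[OF _ tail geometric])
  then show ?thesis
    using assms(2) unfolding feasible_prefix_def by (simp add: field_simps)
qed

lemma sums_if_feasible_prefix:
  assumes "0 \<le> lam" and "lam < 1" and "\<And>n. feasible_prefix lam t a b n f"
  shows "(\<lambda>i. (if f i then a else b) * lam ^ i) sums t"
proof -
  have lim: "(\<lambda>n. lam ^ n * x) \<longlonglongrightarrow> 0" for x
    using assms(1,2) by (intro tendsto_mult_left_zero LIMSEQ_power_zero) simp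
  have "(\<lambda>n. (t - prefix_sum lam a b f n) * (1 - lam)) \<longlonglongrightarrow> 0"
    by (rule tendsto_sandwich[OF _ _ lim[of "min a b"] lim[of "max a b"]])
      (use assms(3) in \<open>simp_all add: feasible_prefix_def\<close>)
  from tendsto_divide[OF this tendsto_const[of "1 - lam"]]
  have "(\<lambda>n. t - prefix_sum lam a b f n) \<longlonglongrightarrow> 0"
    using assms(2) by simp
  then have "(\<lambda>n. t - (t - prefix_sum lam a b f n)) \<longlonglongrightarrow> t - 0"
    by (intro tendsto_diff tendsto_const)
  then show ?thesis
    unfolding sums_def prefix_sum_def by simp
qed

theorem ex_sums_iff_feasible_prefixes:
  assumes "0 \<le> lam" and "lam < 1"
  shows "(\<exists>f. (\<lambda>i. (if f i then a else b) * lam ^ i) sums t) \<longleftrightarrow> (\<forall>n. \<exists>f. feasible_prefix lam t a b n f)"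
proof
  assume "\<exists>f. (\<lambda>i. (if f i then a else b) * lam ^ i) sums t"
  then show "\<forall>n. \<exists>f. feasible_prefix lam t a b n f"
    using feasible_prefix_if_sums[OF assms] by blast
next
  assume "\<forall>n. \<exists>f. feasible_prefix lam t a b n f"
  then have "\<exists>f. \<forall>n. feasible_prefix lam t a b n f"
  proof (intro koenig_binary)
    show "feasible_prefix lam t a b n f \<longleftrightarrow> feasible_prefix lam t a b n g" if "\<forall>i<n. f i = g i" for n f g
      using that by (rule feasible_prefix_cong)
    show "feasible_prefix lam t a b n f" if "feasible_prefix lam t a b (Suc n) f" for n f
      using assms that by (rule feasible_prefix_Suc[OF _ less_imp_le])
  qed blast
  then show "\<exists>f. (\<lambda>i. (if f i then a else b) * lam ^ i) sums t"
    using sums_if_feasible_prefix[OF assms] by blast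
qed

lemma ex_tds_solution_iff_sums:
  "(\<exists>w. tds_solution lam t a b w) \<longleftrightarrow>
   (\<exists>f. (\<lambda>i. (if f i then real_of_rat a else real_of_rat b) * real_of_rat lam ^ i) sums real_of_rat t)"
proof
  assume "\<exists>w. tds_solution lam t a b w"
  then obtain w where w: "\<And>i. w i \<in> {a, b}" "(\<lambda>i. real_of_rat (w i) * real_of_rat lam ^ i) sums real_of_rat t"
    unfolding tds_solution_def by blast
  have "real_of_rat (w i) = (if w i = a then real_of_rat a else real_of_rat b)" for i
    using w(1)[of i] by auto
  then show "\<exists>f. (\<lambda>i. (if f i then real_of_rat a else real_of_rat b) * real_of_rat lam ^ i) sums real_of_rat t"
    using w(2) by (intro exI[of _ "\<lambda>i. w i = a"]) simp
next
  assume "\<exists>f. (\<lambda>i. (if f i then real_of_rat a else real_of_rat b) * real_of_rat lam ^ i) sums real_of_rat t"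
  then obtain f where "(\<lambda>i. (if f i then real_of_rat a else real_of_rat b) * real_of_rat lam ^ i) sums real_of_rat t"
    by blast
  then have "tds_solution lam t a b (\<lambda>i. if f i then a else b)"
    unfolding tds_solution_def by (simp add: if_distrib[of real_of_rat])
  then show "\<exists>w. tds_solution lam t a b w"
    by blast
qed

lemma tds_unsolvable_iff:
  assumes "tds_instance lam"
  shows "(\<nexists>w. tds_solution lam t a b w) \<longleftrightarrow>
    (\<exists>n. \<forall>f. \<not> feasible_prefix (real_of_rat lam) (real_of_rat t) (real_of_rat a) (real_of_rat b) n f)"
proof -
  have "0 \<le> real_of_rat lam" and "real_of_rat lam < 1"
    using assms unfolding tds_instance_def by simp_all
  from ex_sums_iff_feasible_prefixes[OF this] show ?thesis
    unfolding ex_tds_solution_iff_sums by simp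
qed

section \<open>Clearing denominators\<close>

lemma feasible_prefix_scale:
  assumes "0 < c"
  shows "feasible_prefix lam (c * t) (c * a) (c * b) n f \<longleftrightarrow> feasible_prefix lam t a b n f"
proof -
  have "prefix_sum lam (c * a) (c * b) f n = c * prefix_sum lam a b f n"
    unfolding prefix_sum_def sum_distrib_left by (intro sum.cong) auto
  moreover have "min (c * a) (c * b) = c * min a b" and "max (c * a) (c * b) = c * max a b"
    using assms by (simp_all add: min_mult_distrib_left max_mult_distrib_left)
  ultimately show ?thesis
    using assms unfolding feasible_prefix_def
    by (simp add: mult.assoc mult.left_commute[of _ c] flip: right_diff_distrib)
qed

text \<open>\<open>feasible_prefix\<close> for \<open>lam = p / q\<close> and integral \<open>t\<close>, \<open>a\<close>, \<open>b\<close>, multiplied by \<open>q ^ (n + 1)\<close>.\<close>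

definition int_feasible_prefix :: "nat \<Rightarrow> nat \<Rightarrow> int \<Rightarrow> int \<Rightarrow> int \<Rightarrow> nat \<Rightarrow> (nat \<Rightarrow> bool) \<Rightarrow> bool" where
  "int_feasible_prefix p q t a b n f \<longleftrightarrow>
     (let r = (t * int (q ^ n) - (\<Sum>i<n. (if f i then a else b) * int (p ^ i * q ^ (n - i)))) * (int q - int p)
      in int (p ^ n * q) * min a b \<le> r \<and> r \<le> int (p ^ n * q) * max a b)"

lemma feasible_prefix_of_int_iff:
  assumes "0 < q"
  shows "feasible_prefix (real p / real q) (of_int t) (of_int a) (of_int b) n f \<longleftrightarrow>
    int_feasible_prefix p q t a b n f"
proof -
  define lam where "lam = real p / real q"
  define S where "S = prefix_sum lam (of_int a) (of_int b) f n"
  define S' where "S' = (\<Sum>i<n. (if f i then a else b) * int (p ^ i * q ^ (n - i)))"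
  define K where "K = real q ^ Suc n"
  have "K > 0"
    using assms unfolding K_def by simp
  have "real q ^ n * lam ^ i = real (p ^ i * q ^ (n - i))" if "i < n" for i
  proof -
    have "real q ^ n = real q ^ i * real q ^ (n - i)"
      using that by (simp flip: power_add)
    then show ?thesis
      using assms by (simp add: lam_def power_divide)
  qed
  then have S: "real q ^ n * S = of_int S'"
    unfolding S_def S'_def prefix_sum_def sum_distrib_left of_int_sum
    by (intro sum.cong) (simp_all add: mult.left_commute)
  have "K * ((of_int t - S) * (1 - lam)) = (of_int t * real q ^ n - real q ^ n * S) * (real q - real p)"
    using assms unfolding K_def lam_def by (simp add: field_simps)
  then have remainder: "K * ((of_int t - S) * (1 - lam)) = of_int ((t * int (q ^ n) - S') * (int q - int p))"
    by (simp add: S)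
  have bound: "K * (lam ^ n * x) = real (p ^ n * q) * x" for x
    using assms unfolding K_def lam_def by (simp add: field_simps power_divide)
  have "feasible_prefix lam (of_int t) (of_int a) (of_int b) n f \<longleftrightarrow>
      K * (lam ^ n * min (of_int a) (of_int b)) \<le> K * ((of_int t - S) * (1 - lam)) \<and>
      K * ((of_int t - S) * (1 - lam)) \<le> K * (lam ^ n * max (of_int a) (of_int b))"
    using \<open>K > 0\<close> unfolding feasible_prefix_def S_def by simp
  also have "\<dots> \<longleftrightarrow> int_feasible_prefix p q t a b n f"
    unfolding remainder bound int_feasible_prefix_def Let_def S'_def
    by (simp only: of_int_of_nat_eq[where 'a = real, symmetric] of_int_le_iff
        flip: of_int_min of_int_max of_int_mult)
  finally show ?thesis
    unfolding lam_def .
qed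

lemma ex_bits_prefix:
  obtains u :: nat where "u < 2 ^ n" and "\<forall>i<n. bit u i = f i"
proof
  show "horner_sum of_bool 2 (map f [0..<n]) < (2::nat) ^ n"
    using horner_sum_of_bool_2_less[of "map f [0..<n]"] by simp
  show "\<forall>i<n. bit (horner_sum of_bool 2 (map f [0..<n]) :: nat) i = f i"
    by (simp add: bit_horner_sum_bit_iff)
qed

lemma ex_int_feasible_prefix_iff_bits:
  "(\<exists>f. int_feasible_prefix p q t a b n f) \<longleftrightarrow> (\<exists>u::nat<2 ^ n. int_feasible_prefix p q t a b n (bit u))"
proof -
  have cong: "int_feasible_prefix p q t a b n f \<longleftrightarrow> int_feasible_prefix p q t a b n g"
    if "\<forall>i<n. f i = g i" for f g
  proof -
    have "(\<Sum>i<n. (if f i then a else b) * int (p ^ i * q ^ (n - i))) =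
        (\<Sum>i<n. (if g i then a else b) * int (p ^ i * q ^ (n - i)))"
      using that by (intro sum.cong) simp_all
    then show ?thesis
      unfolding int_feasible_prefix_def by simp
  qed
  show ?thesis
  proof
    assume "\<exists>f. int_feasible_prefix p q t a b n f"
    then obtain f where "int_feasible_prefix p q t a b n f" ..
    moreover obtain u :: nat where "u < 2 ^ n" and "\<forall>i<n. bit u i = f i"
      by (rule ex_bits_prefix)
    ultimately show "\<exists>u::nat<2 ^ n. int_feasible_prefix p q t a b n (bit u)"
      using cong[of "bit u" f] by blast
  qed blast
qed

lemma decidable_int_feasible_prefix:
  assumes "computable k p" and "computable k q" and "int_computable k t" and "int_computable k a"
    and "int_computable k b" and "computable k n" and "computable k u"
  shows "decidable k (\<lambda>xs. int_feasible_prefix (p xs) (q xs) (t xs) (a xs) (b xs) (n xs) (bit (u xs)))"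
proof -
  have "int_computable (Suc k) (\<lambda>ys. (if bit (u (tl ys)) (ys ! 0) then a (tl ys) else b (tl ys)) *
      int (p (tl ys) ^ (ys ! 0) * q (tl ys) ^ (n (tl ys) - ys ! 0)))"
    using assms by (intro int_computable_mult int_computable_If int_computable_of_nat decidable_bit
        computable_mult computable_power computable_diff computable_nth computable_tl int_computable_tl) simp_all
  from int_computable_sum[OF this assms(6)]
  have "int_computable k (\<lambda>xs. \<Sum>i<n xs. (if bit (u xs) i then a xs else b xs) * int (p xs ^ i * q xs ^ (n xs - i)))"
    by (simp cong: if_cong)
  with assms show ?thesis
    unfolding int_feasible_prefix_def Let_def min_def max_def
    by (intro decidable_conj decidable_int_le int_computable_mult int_computable_diff int_computable_If
        int_computable_of_nat computable_mult computable_power)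
qed

lemma int_code_eq_int_encode: "int_code = int_encode"
  by (auto simp: fun_eq_iff int_code_def int_encode_def sum_encode_def)

lemma rat_code_eq_iff: "rat_code q = [c1, c2] \<longleftrightarrow> quotient_of q = (int_decode c1, int_decode c2)"
  unfolding rat_code_def int_code_eq_int_encode
  by (metis int_decode_inverse int_encode_inverse list.inject prod.collapse prod.inject)

lemma ex_rat_code_iff:
  "(\<exists>q. rat_code q = [c1, c2]) \<longleftrightarrow> 0 < int_decode c2 \<and> coprime (int_decode c1) (int_decode c2)"
proof
  assume "\<exists>q. rat_code q = [c1, c2]"
  then show "0 < int_decode c2 \<and> coprime (int_decode c1) (int_decode c2)"
    unfolding rat_code_eq_iff using quotient_of_denom_pos quotient_of_coprime by blast
next
  assume "0 < int_decode c2 \<and> coprime (int_decode c1) (int_decode c2)"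
  then have "quotient_of (Fract (int_decode c1) (int_decode c2)) = (int_decode c1, int_decode c2)"
    by (simp add: quotient_of_Fract)
  then show "\<exists>q. rat_code q = [c1, c2]"
    unfolding rat_code_eq_iff ..
qed

lemma rat_code_denom_pos: "rat_code q = [c1, c2] \<Longrightarrow> 0 < int_decode c2"
  unfolding rat_code_eq_iff by (rule quotient_of_denom_pos)

lemma of_rat_eq_if_rat_code:
  "rat_code q = [c1, c2] \<Longrightarrow> real_of_rat q = of_int (int_decode c1) / of_int (int_decode c2)"
  unfolding rat_code_eq_iff by (drule quotient_of_div) (simp add: of_rat_divide)

lemma tds_instance_iff_rat_code:
  assumes "rat_code lam = [l1, l2]"
  shows "tds_instance lam \<longleftrightarrow> 0 < int_decode l1 \<and> int_decode l1 < int_decode l2"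
proof -
  have "0 < int_decode l2"
    using assms by (rule rat_code_denom_pos)
  then show ?thesis
    unfolding tds_instance_def of_rat_less[where 'a = real, symmetric] of_rat_eq_if_rat_code[OF assms]
    by (simp add: zero_less_divide_iff divide_less_eq)
qed

lemma int_decode_pos_iff: "0 < int_decode c \<longleftrightarrow> even c \<and> 0 < c"
  by (auto simp: int_decode_eq)

lemma feasible_prefix_rat_code_iff:
  assumes "rat_code lam = [l1, l2]" and "rat_code t = [t1, t2]" and "rat_code a = [a1, a2]"
    and "rat_code b = [b1, b2]" and "0 < int_decode l1"
  shows "feasible_prefix (real_of_rat lam) (real_of_rat t) (real_of_rat a) (real_of_rat b) n f \<longleftrightarrow>
    int_feasible_prefix (l1 div 2) (l2 div 2) (int_decode t1 * int_decode a2 * int_decode b2)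
      (int_decode a1 * int_decode t2 * int_decode b2) (int_decode b1 * int_decode t2 * int_decode a2) n f"
proof -
  have "0 < int_decode l2" and "0 < int_decode t2" and "0 < int_decode a2" and "0 < int_decode b2"
    using assms(1-4) by (simp_all add: rat_code_denom_pos)
  then have "even l1" and "even l2" and "0 < l2"
    using assms(5) by (simp_all add: int_decode_pos_iff)
  then have "int_decode l1 = int (l1 div 2)" and "int_decode l2 = int (l2 div 2)" and "0 < l2 div 2"
    by (auto simp: int_decode_eq elim!: evenE)
  then have lam: "real_of_rat lam = real (l1 div 2) / real (l2 div 2)"
    using of_rat_eq_if_rat_code[OF assms(1)] by simp
  define c where "c = real_of_int (int_decode t2 * int_decode a2 * int_decode b2)"
  have "0 < c"
    using \<open>0 < int_decode t2\<close> \<open>0 < int_decode a2\<close> \<open>0 < int_decode b2\<close> by (simp add: c_def)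
  have t: "c * real_of_rat t = of_int (int_decode t1 * int_decode a2 * int_decode b2)"
    using \<open>0 < int_decode t2\<close> by (simp add: c_def of_rat_eq_if_rat_code[OF assms(2)])
  have a: "c * real_of_rat a = of_int (int_decode a1 * int_decode t2 * int_decode b2)"
    using \<open>0 < int_decode a2\<close> by (simp add: c_def of_rat_eq_if_rat_code[OF assms(3)])
  have b: "c * real_of_rat b = of_int (int_decode b1 * int_decode t2 * int_decode a2)"
    using \<open>0 < int_decode b2\<close> by (simp add: c_def of_rat_eq_if_rat_code[OF assms(4)])
  have "feasible_prefix (real_of_rat lam) (real_of_rat t) (real_of_rat a) (real_of_rat b) n f \<longleftrightarrow>
      feasible_prefix (real_of_rat lam) (c * real_of_rat t) (c * real_of_rat a) (c * real_of_rat b) n f"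
    by (rule feasible_prefix_scale[OF \<open>0 < c\<close>, symmetric])
  also have "\<dots> \<longleftrightarrow> int_feasible_prefix (l1 div 2) (l2 div 2) (int_decode t1 * int_decode a2 * int_decode b2)
      (int_decode a1 * int_decode t2 * int_decode b2) (int_decode b1 * int_decode t2 * int_decode a2) n f"
    unfolding lam t a b by (rule feasible_prefix_of_int_iff[OF \<open>0 < l2 div 2\<close>])
  finally show ?thesis .
qed


lemma ex_feasible_prefix_rat_code_iff:
  assumes "rat_code lam = [l1, l2]" and "rat_code t = [t1, t2]" and "rat_code a = [a1, a2]"
    and "rat_code b = [b1, b2]" and "0 < int_decode l1"
  shows "(\<exists>f. feasible_prefix (real_of_rat lam) (real_of_rat t) (real_of_rat a) (real_of_rat b) n f) \<longleftrightarrow>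
    (\<exists>u::nat<2 ^ n. int_feasible_prefix (l1 div 2) (l2 div 2) (int_decode t1 * int_decode a2 * int_decode b2)
       (int_decode a1 * int_decode t2 * int_decode b2) (int_decode b1 * int_decode t2 * int_decode a2) n (bit u))"
  using feasible_prefix_rat_code_iff[OF assms] by (simp add: ex_int_feasible_prefix_iff_bits)

lemma ex_rat_code_iff_nat:
  "(\<exists>q. rat_code q = [c1, c2]) \<longleftrightarrow> 0 < int_decode c2 \<and> coprime ((c1 + 1) div 2) (c2 div 2)"
proof -
  have "\<bar>int_decode c1\<bar> = int ((c1 + 1) div 2)"
    by (auto simp: int_decode_eq elim!: oddE)
  moreover have "int_decode c2 = int (c2 div 2)" if "0 < int_decode c2"
    using that by (simp add: int_decode_eq split: if_splits)
  ultimately show ?thesis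
    unfolding ex_rat_code_iff by (metis coprime_abs_left_iff coprime_int_iff)
qed

lemma decidable_ex_rat_code:
  assumes "computable k f" and "computable k g"
  shows "decidable k (\<lambda>xs. \<exists>q. rat_code q = [f xs, g xs])"
  unfolding ex_rat_code_iff_nat
  using assms by (intro decidable_conj decidable_int_less decidable_coprime int_computable_int_decode
      int_computable_const computable_div computable_add computable_const)

section \<open>Unsolvability certificates\<close>

definition unsolvability_certificate :: "nat \<Rightarrow> nat list \<Rightarrow> bool" where
  "unsolvability_certificate n xs \<longleftrightarrow>
     (\<exists>lam t a b. xs = inst_code lam t a b \<and> tds_instance lam \<and>
        (\<forall>f. \<not> feasible_prefix (real_of_rat lam) (real_of_rat t) (real_of_rat a) (real_of_rat b) n f))"

lemma unsolvability_certificate_iff: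
  "unsolvability_certificate n [l1, l2, t1, t2, a1, a2, b1, b2] \<longleftrightarrow>
     (\<exists>q. rat_code q = [l1, l2]) \<and> (\<exists>q. rat_code q = [t1, t2]) \<and>
     (\<exists>q. rat_code q = [a1, a2]) \<and> (\<exists>q. rat_code q = [b1, b2]) \<and>
     0 < int_decode l1 \<and> int_decode l1 < int_decode l2 \<and>
     (\<forall>u::nat<2 ^ n. \<not> int_feasible_prefix (l1 div 2) (l2 div 2) (int_decode t1 * int_decode a2 * int_decode b2)
       (int_decode a1 * int_decode t2 * int_decode b2) (int_decode b1 * int_decode t2 * int_decode a2) n (bit u))"
proof -
  have inst: "[l1, l2, t1, t2, a1, a2, b1, b2] = inst_code lam t a b \<longleftrightarrow>
      rat_code lam = [l1, l2] \<and> rat_code t = [t1, t2] \<and> rat_code a = [a1, a2] \<and> rat_code b = [b1, b2]"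
    for lam t a b
    unfolding inst_code_def rat_code_def by auto
  let ?refuted = "(\<forall>u::nat<2 ^ n. \<not> int_feasible_prefix (l1 div 2) (l2 div 2)
    (int_decode t1 * int_decode a2 * int_decode b2) (int_decode a1 * int_decode t2 * int_decode b2)
    (int_decode b1 * int_decode t2 * int_decode a2) n (bit u))"
  show ?thesis
  proof
    assume "unsolvability_certificate n [l1, l2, t1, t2, a1, a2, b1, b2]"
    then obtain lam t a b where codes: "rat_code lam = [l1, l2]" "rat_code t = [t1, t2]"
        "rat_code a = [a1, a2]" "rat_code b = [b1, b2]"
      and "tds_instance lam"
      and "\<forall>f. \<not> feasible_prefix (real_of_rat lam) (real_of_rat t) (real_of_rat a) (real_of_rat b) n f"
      unfolding unsolvability_certificate_def inst by blast
    moreover have "0 < int_decode l1" and "int_decode l1 < int_decode l2"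
      using \<open>tds_instance lam\<close> tds_instance_iff_rat_code[OF codes(1)] by simp_all
    ultimately show "(\<exists>q. rat_code q = [l1, l2]) \<and> (\<exists>q. rat_code q = [t1, t2]) \<and>
      (\<exists>q. rat_code q = [a1, a2]) \<and> (\<exists>q. rat_code q = [b1, b2]) \<and>
      0 < int_decode l1 \<and> int_decode l1 < int_decode l2 \<and> ?refuted"
      using ex_feasible_prefix_rat_code_iff[OF codes] by blast
  next
    assume "(\<exists>q. rat_code q = [l1, l2]) \<and> (\<exists>q. rat_code q = [t1, t2]) \<and>
      (\<exists>q. rat_code q = [a1, a2]) \<and> (\<exists>q. rat_code q = [b1, b2]) \<and>
      0 < int_decode l1 \<and> int_decode l1 < int_decode l2 \<and> ?refuted"
    then obtain lam t a b where codes: "rat_code lam = [l1, l2]" "rat_code t = [t1, t2]"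
        "rat_code a = [a1, a2]" "rat_code b = [b1, b2]"
      and "0 < int_decode l1" and "int_decode l1 < int_decode l2" and ?refuted
      by blast
    then show "unsolvability_certificate n [l1, l2, t1, t2, a1, a2, b1, b2]"
      unfolding unsolvability_certificate_def inst
      using tds_instance_iff_rat_code[OF codes(1)] ex_feasible_prefix_rat_code_iff[OF codes] by blast
  qed
qed

lemma decidable_unsolvability_certificate: "decidable 9 (\<lambda>zs. unsolvability_certificate (hd zs) (tl zs))"
proof -
  \<comment> \<open>\<open>zs = [n, l1, l2, t1, t2, a1, a2, b1, b2]\<close>; below the bound variable \<open>u\<close> is prepended\<close>
  have "decidable (Suc 9) (\<lambda>ys. \<not> int_feasible_prefix (ys ! 2 div 2) (ys ! 3 div 2)
      (int_decode (ys ! 4) * int_decode (ys ! 7) * int_decode (ys ! 9))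
      (int_decode (ys ! 6) * int_decode (ys ! 5) * int_decode (ys ! 9))
      (int_decode (ys ! 8) * int_decode (ys ! 5) * int_decode (ys ! 7)) (ys ! 1) (bit (ys ! 0)))"
    by (intro decidable_not decidable_int_feasible_prefix int_computable_mult int_computable_int_decode
        computable_div computable_nth computable_const) simp_all
  from decidable_ball[OF this computable_power[OF computable_const computable_nth, of 0 9 2]]
  have refuted: "decidable 9 (\<lambda>zs. \<forall>u::nat<2 ^ zs ! 0. \<not> int_feasible_prefix (zs ! 1 div 2) (zs ! 2 div 2)
      (int_decode (zs ! 3) * int_decode (zs ! 6) * int_decode (zs ! 8))
      (int_decode (zs ! 5) * int_decode (zs ! 4) * int_decode (zs ! 8))
      (int_decode (zs ! 7) * int_decode (zs ! 4) * int_decode (zs ! 6)) (zs ! 0) (bit u))"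
    by (simp add: numeral_eq_Suc)
  have "decidable 9 (\<lambda>zs. (\<exists>q. rat_code q = [zs ! 1, zs ! 2]) \<and> (\<exists>q. rat_code q = [zs ! 3, zs ! 4]) \<and>
      (\<exists>q. rat_code q = [zs ! 5, zs ! 6]) \<and> (\<exists>q. rat_code q = [zs ! 7, zs ! 8]) \<and>
      0 < int_decode (zs ! 1) \<and> int_decode (zs ! 1) < int_decode (zs ! 2) \<and>
      (\<forall>u::nat<2 ^ zs ! 0. \<not> int_feasible_prefix (zs ! 1 div 2) (zs ! 2 div 2)
        (int_decode (zs ! 3) * int_decode (zs ! 6) * int_decode (zs ! 8))
        (int_decode (zs ! 5) * int_decode (zs ! 4) * int_decode (zs ! 8))
        (int_decode (zs ! 7) * int_decode (zs ! 4) * int_decode (zs ! 6)) (zs ! 0) (bit u)))"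
    by (intro decidable_conj decidable_ex_rat_code decidable_int_less int_computable_int_decode
        int_computable_const computable_nth refuted) simp_all
  then show ?thesis
    by (rule decidable_cong) (auto simp: unsolvability_certificate_iff numeral_eq_Suc length_Suc_conv)
qed

lemma unsolvable_instance_codes_eq:
  "{inst_code lam t a b | lam t a b. tds_instance lam \<and> \<not> (\<exists>w. tds_solution lam t a b w)} =
    {xs. length xs = 8 \<and> (\<exists>n. unsolvability_certificate n xs)}"
proof (intro set_eqI iffI)
  fix xs
  assume "xs \<in> {inst_code lam t a b | lam t a b. tds_instance lam \<and> \<not> (\<exists>w. tds_solution lam t a b w)}"
  then obtain lam t a b where "xs = inst_code lam t a b" and "tds_instance lam"
    and "\<not> (\<exists>w. tds_solution lam t a b w)"
    by blast
  moreover have "length (inst_code lam t a b) = 8"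
    by (simp add: inst_code_def rat_code_def)
  ultimately show "xs \<in> {xs. length xs = 8 \<and> (\<exists>n. unsolvability_certificate n xs)}"
    unfolding unsolvability_certificate_def tds_unsolvable_iff[OF \<open>tds_instance lam\<close>] by blast
next
  fix xs
  assume "xs \<in> {xs. length xs = 8 \<and> (\<exists>n. unsolvability_certificate n xs)}"
  then obtain n lam t a b where "xs = inst_code lam t a b" and "tds_instance lam"
    and "\<forall>f. \<not> feasible_prefix (real_of_rat lam) (real_of_rat t) (real_of_rat a) (real_of_rat b) n f"
    unfolding unsolvability_certificate_def by blast
  then show "xs \<in> {inst_code lam t a b | lam t a b. tds_instance lam \<and> \<not> (\<exists>w. tds_solution lam t a b w)}"
    using tds_unsolvable_iff by blast
qed

theorem proposition11:
  shows "re_set 8 {inst_code lam t a b | lam t a b.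
                    tds_instance lam \<and> \<not> (\<exists>w. tds_solution lam t a b w)}"
  unfolding unsolvable_instance_codes_eq
  using re_set_ex_decidable[OF decidable_unsolvability_certificate[unfolded numeral_eq_Suc]]
  by (simp add: numeral_eq_Suc)

end
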